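(* Let $\mathit{VI}$ be a finite set of variables with $\#\mathit{VI}=n$ and let $1\le k\le n$. Then for every $sh\in\mathit{SH}$, $\rho_{\mathit{TSD}_k}(sh^k)=sh^\star$.
   Context: $\mathit{SG}=\wp(\mathit{VI})\setminus\{\emptyset\}$ and $\mathit{SH}=\wp(\mathit{SG})$. For $sh\in\mathit{SH}$: the star-union is $sh^\star=\{S\in\mathit{SG}\mid \exists sh'\subseteq sh: S=\bigcup sh'\}$; for $j\ge1$ the $j$-self-union is $sh^j=\{S\in\mathit{SG}\mid \exists sh'\subseteq sh: \#sh'\le j,\ S=\bigcup sh'\}$. Also $\rho_{\mathit{TSD}_k}(sh)=\{\,S\in\mathit{SG}\mid \forall T\subseteq S:\ \#T<k\implies S=\bigcup\{U\in sh\mid T\subseteq U\subseteq S\}\,\}$. *)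

theory Defs
  imports Main
begin

definition SG :: "'a set \<Rightarrow> 'a set set" where
  "SG VI = Pow VI - {{}}"

definition SH :: "'a set \<Rightarrow> 'a set set set" where
  "SH VI = Pow (SG VI)"

definition star_union :: "'a set \<Rightarrow> 'a set set \<Rightarrow> 'a set set" where
  "star_union VI sh = {S \<in> SG VI. \<exists>sh' \<subseteq> sh. S = \<Union> sh'}"

definition self_union :: "'a set \<Rightarrow> nat \<Rightarrow> 'a set set \<Rightarrow> 'a set set" where
  "self_union VI j sh = {S \<in> SG VI. \<exists>sh' \<subseteq> sh. card sh' \<le> j \<and> S = \<Union> sh'}"

definition rho_TSD :: "'a set \<Rightarrow> nat \<Rightarrow> 'a set set \<Rightarrow> 'a set set" where
  "rho_TSD VI k sh = {S \<in> SG VI. \<forall>T \<subseteq> S. card T < k \<longrightarrow> S = \<Union> {U \<in> sh. T \<subseteq> U \<and> U \<subseteq> S}}"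

end

theory Submission
  imports Defs
begin

text \<open>A sharing group S lies in the star-union of sh iff every point of S lies in a member of sh
  below S. Taking T empty in the definition of rho_TSD k gives exactly this for the k-self-union,
  whose members are themselves unions of members of sh; hence the closure lies in the star-union.
  Conversely, let S be in the star-union and card T < k. For x in S, the finite set insert x T is
  covered by at most card T + 1 \<le> k members of sh below S, and their union is a member of the
  k-self-union between T and S containing x.\<close>

lemma finite_cover_card_le:
  assumes "finite A" and "A \<subseteq> \<Union> F"
  obtains G where "G \<subseteq> F" and "card G \<le> card A" and "A \<subseteq> \<Union> G"
proof -
  have "\<forall>a \<in> A. \<exists>V. V \<in> F \<and> a \<in> V"
    using assms(2) by blast
  then obtain f where f: "\<And>a. a \<in> A \<Longrightarrow> f a \<in> F \<and> a \<in> f a"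
    by metis
  show thesis
  proof
    show "f ` A \<subseteq> F" and "A \<subseteq> \<Union> (f ` A)"
      using f by blast+
    show "card (f ` A) \<le> card A"
      using assms(1) by (rule card_image_le)
  qed
qed

lemma star_union_iff:
  "S \<in> star_union VI sh \<longleftrightarrow> S \<in> SG VI \<and> S \<subseteq> \<Union> {V \<in> sh. V \<subseteq> S}"
proof
  assume "S \<in> star_union VI sh"
  then obtain sh' where "S \<in> SG VI" "sh' \<subseteq> sh" "S = \<Union> sh'"
    unfolding star_union_def by blast
  then show "S \<in> SG VI \<and> S \<subseteq> \<Union> {V \<in> sh. V \<subseteq> S}"
    by blast
next
  assume S: "S \<in> SG VI \<and> S \<subseteq> \<Union> {V \<in> sh. V \<subseteq> S}"
  show "S \<in> star_union VI sh"
    unfolding star_union_def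
  proof (intro CollectI conjI exI[of _ "{V \<in> sh. V \<subseteq> S}"])
    show "S = \<Union> {V \<in> sh. V \<subseteq> S}"
      using S by blast
  qed (use S in blast)+
qed

lemma rho_TSD_subset_star_union:
  assumes "1 \<le> k"
  shows "rho_TSD VI k sh \<subseteq> star_union VI sh"
proof
  fix S assume "S \<in> rho_TSD VI k sh"
  then have SG: "S \<in> SG VI"
    and covered: "\<forall>T \<subseteq> S. card T < k \<longrightarrow> S = \<Union> {U \<in> sh. T \<subseteq> U \<and> U \<subseteq> S}"
    unfolding rho_TSD_def by (blast dest: CollectD)+
  have "S = \<Union> {U \<in> sh. {} \<subseteq> U \<and> U \<subseteq> S}"
    by (rule covered[rule_format]) (use assms in auto)
  then have "S \<subseteq> \<Union> {U \<in> sh. {} \<subseteq> U \<and> U \<subseteq> S}"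
    by (rule equalityD1)
  with SG show "S \<in> star_union VI sh"
    unfolding star_union_iff by blast
qed

lemma star_union_self_union_subset:
  "star_union VI (self_union VI j sh) \<subseteq> star_union VI sh"
proof
  fix S assume "S \<in> star_union VI (self_union VI j sh)"
  then have SG: "S \<in> SG VI" and S_cover: "S \<subseteq> \<Union> {U \<in> self_union VI j sh. U \<subseteq> S}"
    unfolding star_union_iff by blast+
  have "S \<subseteq> \<Union> {V \<in> sh. V \<subseteq> S}"
  proof
    fix x assume "x \<in> S"
    then obtain U where U: "U \<in> self_union VI j sh" "U \<subseteq> S" "x \<in> U"
      using S_cover by blast
    then obtain G where "G \<subseteq> sh" "U = \<Union> G"
      unfolding self_union_def by blast
    with U(2,3) show "x \<in> \<Union> {V \<in> sh. V \<subseteq> S}"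
      by blast
  qed
  with SG show "S \<in> star_union VI sh"
    unfolding star_union_iff ..
qed

lemma self_union_mono:
  assumes "i \<le> j"
  shows "self_union VI i sh \<subseteq> self_union VI j sh"
proof
  fix S assume "S \<in> self_union VI i sh"
  then obtain sh' where "S \<in> SG VI" "sh' \<subseteq> sh" "card sh' \<le> i" "S = \<Union> sh'"
    unfolding self_union_def by blast
  moreover have "card sh' \<le> j"
    using \<open>card sh' \<le> i\<close> assms by (rule order.trans)
  ultimately show "S \<in> self_union VI j sh"
    unfolding self_union_def by blast
qed

lemma star_union_finite_subset_in_self_union:
  assumes S: "S \<in> star_union VI sh" and "A \<subseteq> S" "finite A" "A \<noteq> {}"
  obtains U where "U \<in> self_union VI (card A) sh" "A \<subseteq> U" "U \<subseteq> S"
proof -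
  have SG: "S \<in> SG VI" and S_cover: "S \<subseteq> \<Union> {V \<in> sh. V \<subseteq> S}"
    using S unfolding star_union_iff by blast+
  have "A \<subseteq> \<Union> {V \<in> sh. V \<subseteq> S}"
    using \<open>A \<subseteq> S\<close> S_cover by (rule order.trans)
  with \<open>finite A\<close> obtain G where G: "G \<subseteq> {V \<in> sh. V \<subseteq> S}" "card G \<le> card A" "A \<subseteq> \<Union> G"
    by (rule finite_cover_card_le)
  have "\<Union> G \<subseteq> S"
    using G(1) by blast
  moreover have "\<Union> G \<in> SG VI"
    using SG \<open>\<Union> G \<subseteq> S\<close> G(3) \<open>A \<noteq> {}\<close> unfolding SG_def by blast
  ultimately have "\<Union> G \<in> self_union VI (card A) sh"
    using G(1,2) unfolding self_union_def by blast
  then show thesis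
    using G(3) \<open>\<Union> G \<subseteq> S\<close> by (rule that)
qed

lemma star_union_subset_rho_TSD_self_union:
  assumes "finite VI"
  shows "star_union VI sh \<subseteq> rho_TSD VI k (self_union VI k sh)"
proof
  fix S assume S: "S \<in> star_union VI sh"
  then have SG: "S \<in> SG VI"
    unfolding star_union_iff by blast
  then have "S \<subseteq> VI"
    unfolding SG_def by blast
  then have "finite S"
    using assms by (rule finite_subset)
  have "S \<subseteq> \<Union> {U \<in> self_union VI k sh. T \<subseteq> U \<and> U \<subseteq> S}"
    if T: "T \<subseteq> S" "card T < k" for T
  proof
    fix x assume "x \<in> S"
    have "insert x T \<subseteq> S"
      using \<open>x \<in> S\<close> T(1) by blast
    moreover have "finite (insert x T)"
      using \<open>insert x T \<subseteq> S\<close> \<open>finite S\<close> by (rule finite_subset)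
    ultimately obtain U where U: "U \<in> self_union VI (card (insert x T)) sh" "insert x T \<subseteq> U" "U \<subseteq> S"
      by (rule star_union_finite_subset_in_self_union[OF S _ _ insert_not_empty])
    have "card (insert x T) \<le> k"
      using T(2) \<open>finite (insert x T)\<close> by (simp add: card_insert_if)
    then have "U \<in> self_union VI k sh"
      using U(1) self_union_mono by blast
    with U(2,3) show "x \<in> \<Union> {U \<in> self_union VI k sh. T \<subseteq> U \<and> U \<subseteq> S}"
      by blast
  qed
  then have "\<forall>T \<subseteq> S. card T < k \<longrightarrow> S = \<Union> {U \<in> self_union VI k sh. T \<subseteq> U \<and> U \<subseteq> S}"
    by (intro allI impI subset_antisym) auto
  with SG show "S \<in> rho_TSD VI k (self_union VI k sh)"
    unfolding rho_TSD_def mem_Collect_eq by (rule conjI)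
qed

theorem proposition3p13:
  fixes VI :: "'a set" and n k :: nat and sh :: "'a set set"
  assumes "finite VI" and "card VI = n" and "1 \<le> k" and "k \<le> n"
    and "sh \<in> SH VI"
  shows "rho_TSD VI k (self_union VI k sh) = star_union VI sh"
proof
  show "rho_TSD VI k (self_union VI k sh) \<subseteq> star_union VI sh"
    using rho_TSD_subset_star_union[OF \<open>1 \<le> k\<close>] star_union_self_union_subset
    by blast
  show "star_union VI sh \<subseteq> rho_TSD VI k (self_union VI k sh)"
    using \<open>finite VI\<close> by (rule star_union_subset_rho_TSD_self_union)
qed

end
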